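(* Let $1\le d<n$ and $r\ge1$ be integers such that $$\left(1+d(n-d)+\binom{d}{2}\binom{n-d}{2}\right)r\le\binom{n}{d}.$$ Then the secant variety $\sigma_r(\mathcal{M}_{n,(1^d)})$ of the hypersimplex variety has the expected dimension $\min\{nr-1,\binom{n}{d}-1\}$, which here equals $nr-1$.
   Context: Work over $\mathbb{C}$. The variety $\mathcal{M}_{n,(1^d)}\subset\mathbb{P}^{\binom{n}{d}-1}$ is the toric variety of the hypersimplex $\Delta(n,d)=\mathrm{conv}\{e_{l_1}+\cdots+e_{l_d}:1\le l_1<\cdots<l_d\le n\}$. Concretely, it has coordinates $m_{i_1\cdots i_n}$ for $0/1$ vectors with exactly $d$ ones, and it is the Zariski closure of the image of $(\mu_{11},\ldots,\mu_{n1})\mapsto\bigl(\prod_{k:i_k=1}\mu_{k1}\bigr)$. It has dimension $n-1$. Its $r$-th secant variety $\sigma_r(\mathcal{M}_{n,(1^d)})$ is the Zariski closure of the image of $m_{i_1\cdots i_n}=\sum_{j=1}^r\prod_{k:i_k=1}\mu^{(j)}_{k1}$. Its expected dimension is $\min\{r(n-1)+r-1,\binom nd-1\}$. *)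

theory Defs
  imports Complex_Main "HOL-Library.Poly_Mapping"
begin

type_synonym 'v cpoly = "('v \<Rightarrow>\<^sub>0 nat) \<Rightarrow>\<^sub>0 complex"

definition poly_eval :: "'v cpoly \<Rightarrow> ('v \<Rightarrow> complex) \<Rightarrow> complex" where
  "poly_eval p x = (\<Sum>\<alpha>\<in>Poly_Mapping.keys p. Poly_Mapping.lookup p \<alpha> * (\<Prod>v\<in>Poly_Mapping.keys \<alpha>. (x v) ^ (Poly_Mapping.lookup \<alpha> v)))"

definition poly_vars :: "'v cpoly \<Rightarrow> 'v set" where
  "poly_vars p = (\<Union>m\<in>Poly_Mapping.keys p. Poly_Mapping.keys m)"

definition alg_indep_on :: "('v \<Rightarrow> complex) set \<Rightarrow> 'v set \<Rightarrow> bool" where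
  "alg_indep_on V S \<longleftrightarrow>
     (\<forall>p. poly_vars p \<subseteq> S \<longrightarrow> (\<forall>x\<in>V. poly_eval p x = 0) \<longrightarrow> p = 0)"

text \<open>Dimension of the Zariski closure of V inside the affine space with coordinates C:
  the transcendence degree of its coordinate ring, i.e. the maximal number of
  coordinates that are algebraically independent on V.\<close>
definition affine_dim :: "'v set \<Rightarrow> ('v \<Rightarrow> complex) set \<Rightarrow> nat" where
  "affine_dim C V = Max {card S | S. S \<subseteq> C \<and> alg_indep_on V S}"

text \<open>Coordinates of P^(binom n d - 1): the d-subsets of {0..<n}
  (identified with 0/1 vectors with exactly d ones).\<close>
definition hyp_coords :: "nat \<Rightarrow> nat \<Rightarrow> nat set set" where
  "hyp_coords n d = {S. S \<subseteq> {..<n} \<and> card S = d}"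

text \<open>Image of the parametrization of the r-th secant variety (affine cone):
  m_S = sum_{j<r} prod_{k in S} mu^(j)_k.\<close>
definition secant_param_image :: "nat \<Rightarrow> nat \<Rightarrow> nat \<Rightarrow> (nat set \<Rightarrow> complex) set" where
  "secant_param_image n d r =
     {x. \<exists>\<mu> :: nat \<Rightarrow> nat \<Rightarrow> complex.
          x = (\<lambda>S. if S \<in> hyp_coords n d then (\<Sum>j<r. \<Prod>k\<in>S. \<mu> j k) else 0)}"

text \<open>Projective dimension of sigma_r(M_{n,(1^d)}) = dimension of its affine cone minus 1.\<close>
definition secant_dim :: "nat \<Rightarrow> nat \<Rightarrow> nat \<Rightarrow> nat" where
  "secant_dim n d r = affine_dim (hyp_coords n d) (secant_param_image n d r) - 1"

end

theory Submission
  imports Defs "HOL-Library.FuncSet" "HOL-Computational_Algebra.Polynomial"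
begin

(*
  Upper bound: every coordinate of the secant variety is a polynomial in the n r parameters
  mu^(j)_k, so any n r + 1 coordinates are algebraically dependent (there are more monomials of
  bounded degree in them than monomials in the parameters that these can produce).

  Lower bound: the hypothesis allows a greedy choice of r centres C_1, ..., C_r among the d-subsets
  that pairwise share at most d - 3 elements.  Around C_j take n coordinates: C_j itself and n - 1
  sets obtained from C_j by exchanging one element.  To see that these n r coordinates are
  algebraically independent, specialise mu^(j)_k := t^(w_jk) with
  w_jk = (d + 1) [k in C_j] + x^(j n + k + 1) and let t tend to infinity.  On a coordinate near
  C_j the j-th summand dominates, so every monomial in the chosen coordinates grows like a power
  of t whose exponent depends linearly on the exponent vector.  The neighbourhood incidence matrix
  is nonsingular, hence for all but finitely many x distinct monomials get distinct exponents,
  and the leading term of a nonzero polynomial cannot cancel.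
*)

section \<open>Algebraic dependence by counting monomials\<close>

lemma homogeneous_system_nontrivial_solution:
  fixes a :: "'e \<Rightarrow> 'x \<Rightarrow> 'a::field"
  assumes "finite E" "finite X" "card E < card X"
  shows "\<exists>c. (\<exists>i\<in>X. c i \<noteq> 0) \<and> (\<forall>e\<in>E. (\<Sum>i\<in>X. a e i * c i) = 0)"
  using assms
proof (induction E arbitrary: X a rule: finite_induct)
  case empty
  then obtain i where "i \<in> X" by fastforce
  then show ?case by (intro exI[of _ "\<lambda>_. 1"]) auto
next
  case (insert e E)
  show ?case
  proof (cases "\<forall>i\<in>X. a e i = 0")
    case True
    have "card E < card X" using insert by simp
    with insert.IH[OF insert.prems(1)] obtain c where
      "\<exists>i\<in>X. c i \<noteq> 0" "\<forall>e\<in>E. (\<Sum>i\<in>X. a e i * c i) = 0" by blast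
    with True show ?thesis by (intro exI[of _ c]) auto
  next
    case False
    then obtain i0 where i0: "i0 \<in> X" "a e i0 \<noteq> 0" by blast
    define X' where "X' = X - {i0}"
    define a' where "a' = (\<lambda>e' i. a e' i - a e' i0 * a e i / a e i0)"
    have "card E < card X'" using insert i0 by (simp add: X'_def card_Diff_singleton)
    with insert.IH[of X' a'] obtain c' where
      c': "\<exists>i\<in>X'. c' i \<noteq> 0" "\<forall>e\<in>E. (\<Sum>i\<in>X'. a' e i * c' i) = 0"
      using insert.prems(1) by (auto simp: X'_def)
    define c where "c = c'(i0 := - (\<Sum>i\<in>X'. a e i * c' i) / a e i0)"
    have sum_c: "(\<Sum>i\<in>X. g i * c i) = g i0 * c i0 + (\<Sum>i\<in>X'. g i * c' i)" for g
      using i0 insert.prems(1) by (simp add: X'_def c_def sum.remove)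
    have "(\<Sum>i\<in>X. a e' i * c i) = 0" if e': "e' \<in> E" for e'
    proof -
      have "(\<Sum>i\<in>X'. a' e' i * c' i)
          = (\<Sum>i\<in>X'. a e' i * c' i) - a e' i0 / a e i0 * (\<Sum>i\<in>X'. a e i * c' i)"
        by (simp add: a'_def algebra_simps sum_subtractf sum_distrib_left)
      with c'(2) e' show ?thesis unfolding sum_c by (simp add: c_def algebra_simps)
    qed
    moreover have "(\<Sum>i\<in>X. a e i * c i) = 0" unfolding sum_c using i0 by (simp add: c_def)
    moreover have "\<exists>i\<in>X. c i \<noteq> 0" using c' by (auto simp: c_def X'_def)
    ultimately show ?thesis by (intro exI[of _ c]) auto
  qed
qed

definition box_exps :: "'p set \<Rightarrow> nat \<Rightarrow> ('p \<Rightarrow> nat) set" where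
  "box_exps P K = {\<beta>. (\<forall>q. q \<notin> P \<longrightarrow> \<beta> q = 0) \<and> (\<forall>q\<in>P. \<beta> q \<le> K)}"

definition monomial_fun :: "'p set \<Rightarrow> ('p \<Rightarrow> nat) \<Rightarrow> ('p \<Rightarrow> 'a::comm_semiring_1) \<Rightarrow> 'a" where
  "monomial_fun P \<beta> \<mu> = (\<Prod>q\<in>P. \<mu> q ^ \<beta> q)"

definition box_polys :: "'p set \<Rightarrow> nat \<Rightarrow> (('p \<Rightarrow> 'a::comm_semiring_1) \<Rightarrow> 'a) set" where
  "box_polys P K = {f. \<exists>c. \<forall>\<mu>. f \<mu> = (\<Sum>\<beta>\<in>box_exps P K. c \<beta> * monomial_fun P \<beta> \<mu>)}"

lemma bij_betw_box_exps_PiE: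
  "bij_betw (\<lambda>\<beta>. restrict \<beta> P) (box_exps P K) (PiE P (\<lambda>_. {..K}))"
proof (rule bij_betw_byWitness[where f' = "\<lambda>f q. if q \<in> P then f q else 0"])
qed (auto simp: box_exps_def fun_eq_iff PiE_def extensional_def Pi_def)

lemma finite_box_exps: "finite P \<Longrightarrow> finite (box_exps P K)"
  using bij_betw_finite[OF bij_betw_box_exps_PiE, of P K] by (simp add: finite_PiE)

lemma card_box_exps: "finite P \<Longrightarrow> card (box_exps P K) = (K + 1) ^ card P"
  using bij_betw_same_card[OF bij_betw_box_exps_PiE, of P K] by (simp add: card_PiE)

lemma box_exps_mono: "K \<le> K' \<Longrightarrow> box_exps P K \<subseteq> box_exps P K'"
  by (auto simp: box_exps_def)

lemma box_polys_mono:
  assumes "finite P" "K \<le> K'" "f \<in> box_polys P K"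
  shows "f \<in> box_polys P K'"
proof -
  obtain c where c: "\<And>\<mu>. f \<mu> = (\<Sum>\<beta>\<in>box_exps P K. c \<beta> * monomial_fun P \<beta> \<mu>)"
    using assms(3) by (auto simp: box_polys_def)
  define c' where "c' \<beta> = (if \<beta> \<in> box_exps P K then c \<beta> else 0)" for \<beta>
  have "f \<mu> = (\<Sum>\<beta>\<in>box_exps P K'. c' \<beta> * monomial_fun P \<beta> \<mu>)" for \<mu>
    unfolding c using assms box_exps_mono[OF assms(2)]
    by (intro sum.mono_neutral_cong_left) (auto simp: c'_def finite_box_exps)
  then show ?thesis by (auto simp: box_polys_def)
qed

lemma box_polys_zero: "(\<lambda>_. 0) \<in> box_polys P K"
  by (auto simp: box_polys_def intro!: exI[of _ "\<lambda>_. 0"])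

lemma box_polys_add:
  assumes "f \<in> box_polys P K" "g \<in> box_polys P K"
  shows "(\<lambda>\<mu>. f \<mu> + g \<mu>) \<in> box_polys P K"
proof -
  obtain c c' where
    "\<And>\<mu>. f \<mu> = (\<Sum>\<beta>\<in>box_exps P K. c \<beta> * monomial_fun P \<beta> \<mu>)"
    "\<And>\<mu>. g \<mu> = (\<Sum>\<beta>\<in>box_exps P K. c' \<beta> * monomial_fun P \<beta> \<mu>)"
    using assms by (auto simp: box_polys_def)
  then have "f \<mu> + g \<mu> = (\<Sum>\<beta>\<in>box_exps P K. (c \<beta> + c' \<beta>) * monomial_fun P \<beta> \<mu>)" for \<mu>
    by (simp add: sum.distrib algebra_simps)
  then show ?thesis by (auto simp: box_polys_def)
qed

lemma box_polys_sum:
  "(\<And>i. i \<in> I \<Longrightarrow> f i \<in> box_polys P K) \<Longrightarrow> (\<lambda>\<mu>. \<Sum>i\<in>I. f i \<mu>) \<in> box_polys P K"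
  by (induction I rule: infinite_finite_induct) (simp_all add: box_polys_zero box_polys_add)

lemma monomial_fun_in_box_polys:
  fixes P :: "'p set"
  assumes "finite P" "\<beta> \<in> box_exps P K"
  shows "monomial_fun P \<beta> \<in> box_polys P K"
proof -
  have "monomial_fun P \<beta> \<mu> =
      (\<Sum>\<beta>'\<in>box_exps P K. of_bool (\<beta>' = \<beta>) * monomial_fun P \<beta>' \<mu>)" for \<mu> :: "'p \<Rightarrow> 'a"
    using assms by (simp add: finite_box_exps Int_insert_right)
  then show ?thesis
    unfolding box_polys_def by (intro CollectI exI[of _ "\<lambda>\<beta>'. of_bool (\<beta>' = \<beta>)"]) blast
qed

lemma monomial_fun_add:
  "monomial_fun P (\<lambda>q. \<beta> q + \<beta>' q) \<mu> = monomial_fun P \<beta> \<mu> * monomial_fun P \<beta>' \<mu>"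
  by (simp add: monomial_fun_def power_add prod.distrib)

lemma box_polys_mult:
  fixes P :: "'p set"
  assumes P: "finite P" and "f \<in> box_polys P K" "g \<in> box_polys P K'"
  shows "(\<lambda>\<mu>. f \<mu> * g \<mu>) \<in> box_polys P (K + K')"
proof -
  obtain c c' where
    c: "\<And>\<mu>. f \<mu> = (\<Sum>\<beta>\<in>box_exps P K. c \<beta> * monomial_fun P \<beta> \<mu>)" and
    c': "\<And>\<mu>. g \<mu> = (\<Sum>\<beta>\<in>box_exps P K'. c' \<beta> * monomial_fun P \<beta> \<mu>)"
    using assms by (auto simp: box_polys_def)
  define M where "M = box_exps P K \<times> box_exps P K'"
  define plus where "plus z = (\<lambda>q. fst z q + snd z q)" for z :: "('p \<Rightarrow> nat) \<times> ('p \<Rightarrow> nat)"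
  define b where "b \<beta> = (\<Sum>z\<in>{z\<in>M. plus z = \<beta>}. c (fst z) * c' (snd z))" for \<beta>
  have M: "finite M" using P by (simp add: M_def finite_box_exps)
  have plus_M: "plus ` M \<subseteq> box_exps P (K + K')"
    by (auto simp: M_def plus_def box_exps_def add_mono)
  have "f \<mu> * g \<mu> = (\<Sum>\<beta>\<in>box_exps P (K + K'). b \<beta> * monomial_fun P \<beta> \<mu>)" for \<mu>
  proof -
    have "f \<mu> * g \<mu> = (\<Sum>z\<in>M. c (fst z) * c' (snd z) * monomial_fun P (plus z) \<mu>)"
      unfolding c c' sum_product M_def sum.cartesian_product
      by (rule sum.cong) (auto simp: plus_def monomial_fun_add mult_ac)
    also have "\<dots> = (\<Sum>\<beta>\<in>box_exps P (K + K').
        \<Sum>z\<in>{z\<in>M. plus z = \<beta>}. c (fst z) * c' (snd z) * monomial_fun P (plus z) \<mu>)"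
      by (rule sum.group[symmetric, OF M finite_box_exps[OF P] plus_M])
    also have "\<dots> = (\<Sum>\<beta>\<in>box_exps P (K + K'). b \<beta> * monomial_fun P \<beta> \<mu>)"
      unfolding b_def sum_distrib_right by (auto intro!: sum.cong)
    finally show ?thesis .
  qed
  then show ?thesis by (auto simp: box_polys_def)
qed

lemma box_polys_one: "finite P \<Longrightarrow> (\<lambda>_. 1) \<in> box_polys P K"
  using monomial_fun_in_box_polys[of P "\<lambda>_. 0" K]
  by (simp add: box_exps_def monomial_fun_def[abs_def])

lemma box_polys_prod:
  assumes "finite P" "finite I" "\<And>i. i \<in> I \<Longrightarrow> f i \<in> box_polys P (K i)"
  shows "(\<lambda>\<mu>. \<Prod>i\<in>I. f i \<mu>) \<in> box_polys P (\<Sum>i\<in>I. K i)"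
  using assms(2,3)
  by (induction I rule: finite_induct) (simp_all add: box_polys_one box_polys_mult assms(1))

lemma box_polys_power:
  "finite P \<Longrightarrow> f \<in> box_polys P K \<Longrightarrow> (\<lambda>\<mu>. f \<mu> ^ m) \<in> box_polys P (m * K)"
  using box_polys_prod[of P "{..<m}" "\<lambda>_. f" "\<lambda>_. K"] by simp

lemma card_box_exps_less:
  assumes "finite P" "finite T" "card T = card P + 1"
  defines "D \<equiv> (card P + 1) ^ card P"
  shows "card (box_exps P ((card P + 1) * D)) < card (box_exps T D)"
proof -
  define N where "N = card P"
  have "card (box_exps P ((N + 1) * D)) = ((N + 1) * D + 1) ^ N"
    using assms(1) by (simp add: card_box_exps N_def)
  also have "\<dots> \<le> ((N + 1) * (D + 1)) ^ N"
    by (rule power_mono) simp_all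
  also have "\<dots> = D * (D + 1) ^ N"
    by (simp only: power_mult_distrib D_def N_def)
  also have "\<dots> < (D + 1) ^ (N + 1)"
    by simp
  also have "\<dots> = card (box_exps T D)"
    using assms(2,3) by (simp add: card_box_exps N_def)
  finally show ?thesis by (simp add: N_def)
qed

lemma box_polys_linearly_dependent:
  fixes g :: "'i \<Rightarrow> ('p \<Rightarrow> 'a::field) \<Rightarrow> 'a"
  assumes P: "finite P" and A: "finite A" and card: "card (box_exps P K) < card A"
    and g: "\<And>\<alpha>. \<alpha> \<in> A \<Longrightarrow> g \<alpha> \<in> box_polys P K"
  shows "\<exists>c. (\<exists>\<alpha>\<in>A. c \<alpha> \<noteq> 0) \<and> (\<forall>\<mu>. (\<Sum>\<alpha>\<in>A. c \<alpha> * g \<alpha> \<mu>) = 0)"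
proof -
  have "\<forall>\<alpha>\<in>A. \<exists>b. \<forall>\<mu>. g \<alpha> \<mu> = (\<Sum>\<beta>\<in>box_exps P K. b \<beta> * monomial_fun P \<beta> \<mu>)"
    using g by (auto simp: box_polys_def)
  then obtain b where b: "\<And>\<alpha> \<mu>. \<alpha> \<in> A \<Longrightarrow>
      g \<alpha> \<mu> = (\<Sum>\<beta>\<in>box_exps P K. b \<alpha> \<beta> * monomial_fun P \<beta> \<mu>)"
    by (metis bchoice)
  obtain c where c: "\<exists>\<alpha>\<in>A. c \<alpha> \<noteq> 0"
    "\<And>\<beta>. \<beta> \<in> box_exps P K \<Longrightarrow> (\<Sum>\<alpha>\<in>A. b \<alpha> \<beta> * c \<alpha>) = 0"
    using homogeneous_system_nontrivial_solution[OF finite_box_exps[OF P] A card,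
        of "\<lambda>\<beta> \<alpha>. b \<alpha> \<beta>"]
    by blast
  have "(\<Sum>\<alpha>\<in>A. c \<alpha> * g \<alpha> \<mu>) = 0" for \<mu>
  proof -
    have "(\<Sum>\<alpha>\<in>A. c \<alpha> * g \<alpha> \<mu>) =
        (\<Sum>\<alpha>\<in>A. \<Sum>\<beta>\<in>box_exps P K. c \<alpha> * b \<alpha> \<beta> * monomial_fun P \<beta> \<mu>)"
      by (rule sum.cong) (simp_all add: b sum_distrib_left mult.assoc)
    also have "\<dots> = (\<Sum>\<beta>\<in>box_exps P K. (\<Sum>\<alpha>\<in>A. b \<alpha> \<beta> * c \<alpha>) * monomial_fun P \<beta> \<mu>)"
      unfolding sum_distrib_right by (subst sum.swap) (auto intro!: sum.cong simp: mult_ac)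
    also have "\<dots> = 0"
      using c(2) by simp
    finally show ?thesis .
  qed
  with c(1) show ?thesis by blast
qed

lemma prod_keys_power_eq:
  fixes x :: "'v \<Rightarrow> 'a::comm_monoid_mult"
  assumes "finite T" "Poly_Mapping.keys m \<subseteq> T"
  shows "(\<Prod>v\<in>Poly_Mapping.keys m. x v ^ Poly_Mapping.lookup m v) = (\<Prod>v\<in>T. x v ^ Poly_Mapping.lookup m v)"
  by (rule prod.mono_neutral_left) (use assms in \<open>auto simp: in_keys_iff\<close>)

lemma poly_eval_cong:
  assumes "poly_vars p \<subseteq> T" "\<And>v. v \<in> T \<Longrightarrow> x v = y v"
  shows "poly_eval p x = poly_eval p y"
  unfolding poly_eval_def using assms
  by (intro sum.cong arg_cong[where f = "\<lambda>z. _ * z"] prod.cong) (auto simp: poly_vars_def)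

lemma exists_cpoly_with_eval:
  fixes A :: "('v \<Rightarrow> nat) set" and c :: "('v \<Rightarrow> nat) \<Rightarrow> complex"
  assumes T: "finite T" and A: "finite A" and supp: "\<And>\<alpha>. \<alpha> \<in> A \<Longrightarrow> {v. \<alpha> v \<noteq> 0} \<subseteq> T"
    and nz: "\<exists>\<alpha>\<in>A. c \<alpha> \<noteq> 0"
  shows "\<exists>p::'v cpoly. p \<noteq> 0 \<and> poly_vars p \<subseteq> T \<and>
     (\<forall>x. poly_eval p x = (\<Sum>\<alpha>\<in>A. c \<alpha> * (\<Prod>v\<in>T. x v ^ \<alpha> v)))"
proof -
  have lookup_mon: "Poly_Mapping.lookup (Abs_poly_mapping \<alpha>) = \<alpha>" if "\<alpha> \<in> A" for \<alpha>
    using finite_subset[OF supp[OF that] T] by simp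
  then have inj: "inj_on Abs_poly_mapping A"
    by (rule inj_on_inverseI)
  have keys_mon: "Poly_Mapping.keys (Abs_poly_mapping \<alpha>) \<subseteq> T" if "\<alpha> \<in> A" for \<alpha>
    using supp[OF that] by (auto simp: in_keys_iff lookup_mon[OF that])
  define coeff where "coeff m = (if m \<in> Abs_poly_mapping ` A then c (Poly_Mapping.lookup m) else 0)" for m
  define p where "p = Abs_poly_mapping coeff"
  have "finite {m. coeff m \<noteq> 0}"
    by (rule finite_subset[of _ "Abs_poly_mapping ` A"]) (use A in \<open>auto simp: coeff_def\<close>)
  then have lookup_p: "Poly_Mapping.lookup p = coeff"
    by (simp add: p_def)
  have keys_p: "Poly_Mapping.keys p \<subseteq> Abs_poly_mapping ` A"
    by (auto simp: in_keys_iff lookup_p coeff_def split: if_splits)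
  obtain \<alpha>0 where "\<alpha>0 \<in> A" "c \<alpha>0 \<noteq> 0"
    using nz by blast
  then have "Poly_Mapping.lookup p (Abs_poly_mapping \<alpha>0) \<noteq> 0"
    by (simp add: lookup_p coeff_def lookup_mon)
  then have "p \<noteq> 0"
    by auto
  moreover have "poly_vars p \<subseteq> T"
    using keys_p keys_mon unfolding poly_vars_def by blast
  moreover have "poly_eval p x = (\<Sum>\<alpha>\<in>A. c \<alpha> * (\<Prod>v\<in>T. x v ^ \<alpha> v))" for x
  proof -
    have "poly_eval p x = (\<Sum>m\<in>Abs_poly_mapping ` A.
        Poly_Mapping.lookup p m * (\<Prod>v\<in>Poly_Mapping.keys m. x v ^ Poly_Mapping.lookup m v))"
      unfolding poly_eval_def using keys_p A
      by (intro sum.mono_neutral_left) (simp_all add: in_keys_iff)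
    also have "\<dots> = (\<Sum>\<alpha>\<in>A. c \<alpha> * (\<Prod>v\<in>Poly_Mapping.keys (Abs_poly_mapping \<alpha>). x v ^ \<alpha> v))"
      by (simp add: sum.reindex[OF inj] lookup_p coeff_def lookup_mon)
    also have "\<dots> = (\<Sum>\<alpha>\<in>A. c \<alpha> * (\<Prod>v\<in>T. x v ^ \<alpha> v))"
    proof (rule sum.cong[OF refl])
      fix \<alpha> assume "\<alpha> \<in> A"
      then show "c \<alpha> * (\<Prod>v\<in>Poly_Mapping.keys (Abs_poly_mapping \<alpha>). x v ^ \<alpha> v) =
          c \<alpha> * (\<Prod>v\<in>T. x v ^ \<alpha> v)"
        using prod_keys_power_eq[OF T keys_mon, of \<alpha> x] by (simp add: lookup_mon)
    qed
    finally show ?thesis .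
  qed
  ultimately show ?thesis by blast
qed

lemma alg_dependent_of_box_polys:
  fixes f :: "'v \<Rightarrow> ('p \<Rightarrow> complex) \<Rightarrow> complex"
  assumes P: "finite P" and T: "finite T" and card_T: "card T = card P + 1"
    and f: "\<And>S. S \<in> T \<Longrightarrow> f S \<in> box_polys P 1"
  shows "\<exists>p::'v cpoly. p \<noteq> 0 \<and> poly_vars p \<subseteq> T \<and> (\<forall>\<mu>. poly_eval p (\<lambda>S. f S \<mu>) = 0)"
proof -
  define D where "D = (card P + 1) ^ card P"
  define K where "K = (card P + 1) * D"
  define A where "A = box_exps T D"
  have A: "finite A"
    using T by (simp add: A_def finite_box_exps)
  have supp: "{v. \<alpha> v \<noteq> 0} \<subseteq> T" if "\<alpha> \<in> A" for \<alpha>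
    using that by (auto simp: A_def box_exps_def)
  have "(\<lambda>\<mu>. \<Prod>S\<in>T. f S \<mu> ^ \<alpha> S) \<in> box_polys P K" if "\<alpha> \<in> A" for \<alpha>
  proof (rule box_polys_mono[OF P])
    show "(\<lambda>\<mu>. \<Prod>S\<in>T. f S \<mu> ^ \<alpha> S) \<in> box_polys P (\<Sum>S\<in>T. \<alpha> S * 1)"
      by (intro box_polys_prod box_polys_power P T f)
    have "(\<Sum>S\<in>T. \<alpha> S * 1) \<le> (\<Sum>S\<in>T. D)"
      using that by (intro sum_mono) (auto simp: A_def box_exps_def)
    then show "(\<Sum>S\<in>T. \<alpha> S * 1) \<le> K"
      using card_T by (simp add: K_def)
  qed
  moreover have "card (box_exps P K) < card A"
    using card_box_exps_less[OF P T card_T] by (simp add: A_def K_def D_def)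
  ultimately obtain c where c: "\<exists>\<alpha>\<in>A. c \<alpha> \<noteq> 0"
    "\<And>\<mu>. (\<Sum>\<alpha>\<in>A. c \<alpha> * (\<Prod>S\<in>T. f S \<mu> ^ \<alpha> S)) = 0"
    using box_polys_linearly_dependent[OF P A, of K "\<lambda>\<alpha> \<mu>. \<Prod>S\<in>T. f S \<mu> ^ \<alpha> S"] by blast
  then obtain p :: "'v cpoly" where
    "p \<noteq> 0" "poly_vars p \<subseteq> T" "\<And>x. poly_eval p x = (\<Sum>\<alpha>\<in>A. c \<alpha> * (\<Prod>v\<in>T. x v ^ \<alpha> v))"
    using exists_cpoly_with_eval[OF T A supp] by blast
  with c(2) show ?thesis
    by auto
qed

section \<open>The upper bound\<close>

lemma affine_dim_eqI:
  assumes "S \<subseteq> C" "alg_indep_on V S" "card S = k"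
    and "\<And>S'. S' \<subseteq> C \<Longrightarrow> alg_indep_on V S' \<Longrightarrow> card S' \<le> k"
  shows "affine_dim C V = k"
  unfolding affine_dim_def
proof (rule Max_eqI)
  show "finite {card S | S. S \<subseteq> C \<and> alg_indep_on V S}"
    by (rule finite_subset[of _ "{..k}"]) (use assms(4) in auto)
qed (use assms in auto)

lemma secant_summand_in_box_polys:
  fixes j r n :: nat and S :: "nat set"
  assumes j: "j < r" and S: "S \<subseteq> {..<n}"
  shows "(\<lambda>m :: nat \<times> nat \<Rightarrow> 'a::comm_semiring_1. \<Prod>k\<in>S. m (j, k)) \<in> box_polys ({..<r} \<times> {..<n}) 1"
proof -
  define P where "P = {..<r} \<times> {..<n}"
  define \<beta> where "\<beta> q = (of_bool (q \<in> {j} \<times> S) :: nat)" for q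
  have sub: "{j} \<times> S \<subseteq> P"
    using j S by (auto simp: P_def)
  have "monomial_fun P \<beta> m = (\<Prod>k\<in>S. m (j, k))" for m :: "nat \<times> nat \<Rightarrow> 'a"
  proof -
    have "monomial_fun P \<beta> m = (\<Prod>q\<in>{j} \<times> S. m q)"
      unfolding monomial_fun_def \<beta>_def using sub
      by (intro prod.mono_neutral_cong_right) (auto simp: P_def)
    also have "{j} \<times> S = Pair j ` S"
      by auto
    also have "(\<Prod>q\<in>Pair j ` S. m q) = (\<Prod>k\<in>S. m (j, k))"
      by (simp add: prod.reindex inj_on_def)
    finally show ?thesis .
  qed
  then have eq: "monomial_fun P \<beta> = (\<lambda>m :: nat \<times> nat \<Rightarrow> 'a. \<Prod>k\<in>S. m (j, k))"
    by (rule ext)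
  have "\<beta> \<in> box_exps P 1"
    using sub by (auto simp: box_exps_def \<beta>_def)
  then show ?thesis
    unfolding P_def[symmetric] eq[symmetric] by (rule monomial_fun_in_box_polys[rotated]) (simp add: P_def)
qed

lemma card_alg_indep_le:
  assumes S: "S \<subseteq> hyp_coords n d" and indep: "alg_indep_on (secant_param_image n d r) S"
  shows "card S \<le> n * r"
proof (rule ccontr)
  assume "\<not> card S \<le> n * r"
  then have "n * r + 1 \<le> card S"
    by simp
  then obtain T where T: "T \<subseteq> S" "card T = n * r + 1" "finite T"
    by (rule obtain_subset_with_card_n)
  define P where "P = {..<r} \<times> {..<n}"
  define f where "f S' m = (\<Sum>j<r. \<Prod>k\<in>S'. m (j, k))" for S' and m :: "nat \<times> nat \<Rightarrow> complex"
  have "f S' \<in> box_polys P 1" if "S' \<in> T" for S'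
    using that T(1) S unfolding f_def P_def
    by (intro box_polys_sum secant_summand_in_box_polys) (auto simp: hyp_coords_def)
  moreover have "card T = card P + 1"
    using T(2) by (simp add: P_def card_cartesian_product)
  ultimately obtain p :: "nat set cpoly" where
    p: "p \<noteq> 0" "poly_vars p \<subseteq> T" "\<And>m. poly_eval p (\<lambda>S'. f S' m) = 0"
    using alg_dependent_of_box_polys[of P T f] T(3) by (auto simp: P_def)
  have "poly_eval p y = 0" if y_in: "y \<in> secant_param_image n d r" for y
  proof -
    obtain \<mu> where y: "y = (\<lambda>S'. if S' \<in> hyp_coords n d then (\<Sum>j<r. \<Prod>k\<in>S'. \<mu> j k) else 0)"
      using y_in unfolding secant_param_image_def by blast
    have "poly_eval p y = poly_eval p (\<lambda>S'. f S' (\<lambda>(j, k). \<mu> j k))"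
      using p(2) T(1) S by (intro poly_eval_cong) (auto simp: y f_def)
    with p(3) show ?thesis by simp
  qed
  with p(1,2) T(1) indep show False
    by (auto simp: alg_indep_on_def)
qed

section \<open>Neighbourhoods and separated centres\<close>

\<comment> \<open>Given a \<in> C and b \<notin> C, this indexes by i < n some n of the sets at Johnson distance at
  most 1 from C, so that every centre contributes exactly n coordinates.\<close>
definition neighbour :: "nat set \<Rightarrow> nat \<Rightarrow> nat \<Rightarrow> nat \<Rightarrow> nat set" where
  "neighbour C a b i =
     (if i = a then C else if i \<notin> C then insert i (C - {a}) else insert b (C - {i}))"

locale neighbourhood =
  fixes n :: nat and C :: "nat set" and a b :: nat
  assumes C_subset: "C \<subseteq> {..<n}" and a_in_C: "a \<in> C"
    and b_less: "b < n" and b_notin_C: "b \<notin> C"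
begin

lemma finite_C: "finite C"
  using C_subset finite_subset by blast

lemma neighbour_subset: "i < n \<Longrightarrow> neighbour C a b i \<subseteq> {..<n}"
  using C_subset a_in_C b_less by (auto simp: neighbour_def)

lemma card_neighbour: "card (neighbour C a b i) = card C"
proof -
  have "card C > 0"
    using finite_C a_in_C card_gt_0_iff by blast
  then show ?thesis
    using finite_C a_in_C b_notin_C by (auto simp: neighbour_def card_insert_if card_Diff_singleton_if)
qed

lemma card_neighbour_Int: "card C \<le> card (neighbour C a b i \<inter> C) + 1"
proof (cases "i = a")
  case False
  define x where "x = (if i \<in> C then i else a)"
  have "neighbour C a b i \<inter> C = C - {x}"
    using False b_notin_C by (auto simp: neighbour_def x_def)
  moreover have "x \<in> C"
    using a_in_C by (simp add: x_def)
  ultimately show ?thesis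
    using finite_C by (simp add: card_Diff_singleton)
qed (simp add: neighbour_def)

definition neighbour_index :: "nat set \<Rightarrow> nat" where
  "neighbour_index S =
     (if S = C then a else if a \<notin> S then the_elem (S - C) else the_elem (C - S))"

lemma neighbour_index_neighbour: "neighbour_index (neighbour C a b i) = i"
proof -
  consider "i = a" | "i \<notin> C" | "i \<in> C" "i \<noteq> a"
    by blast
  then show ?thesis
  proof cases
    case 2
    then have "insert i (C - {a}) - C = {i}" "insert i (C - {a}) \<noteq> C"
      by auto
    with 2 a_in_C show ?thesis
      by (auto simp: neighbour_def neighbour_index_def)
  next
    case 3
    then have "C - insert b (C - {i}) = {i}" "insert b (C - {i}) \<noteq> C"
      using b_notin_C by auto
    with 3 a_in_C show ?thesis
      by (auto simp: neighbour_def neighbour_index_def)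
  qed (simp add: neighbour_def neighbour_index_def)
qed

lemma inj_neighbour: "inj (neighbour C a b)"
  by (rule inj_on_inverseI[where g = neighbour_index]) (rule neighbour_index_neighbour)

lemma neighbours_containing:
  "k \<in> C - {a} \<Longrightarrow> {i. i < n \<and> k \<in> neighbour C a b i} = {..<n} - {k}"
  "k < n \<Longrightarrow> k \<notin> C \<Longrightarrow> k \<noteq> b \<Longrightarrow> {i. i < n \<and> k \<in> neighbour C a b i} = {k}"
  "{i. i < n \<and> b \<in> neighbour C a b i} = insert b (C - {a})"
  using C_subset a_in_C b_notin_C b_less by (auto simp: neighbour_def)

lemma sum_neighbour_sums:
  fixes \<delta> :: "nat \<Rightarrow> 'a::comm_semiring_1"
  shows "(\<Sum>k<n. \<Sum>i\<in>{i. i < n \<and> k \<in> neighbour C a b i}. \<delta> i) = of_nat (card C) * (\<Sum>i<n. \<delta> i)"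
proof -
  have "(\<Sum>k<n. \<Sum>i\<in>{i. i < n \<and> k \<in> neighbour C a b i}. \<delta> i)
      = (\<Sum>k<n. \<Sum>i<n. if k \<in> neighbour C a b i then \<delta> i else 0)"
  proof (rule sum.cong[OF refl])
    fix k
    have "{i. i < n \<and> k \<in> neighbour C a b i} = {i\<in>{..<n}. k \<in> neighbour C a b i}"
      by auto
    then show "(\<Sum>i\<in>{i. i < n \<and> k \<in> neighbour C a b i}. \<delta> i)
        = (\<Sum>i<n. if k \<in> neighbour C a b i then \<delta> i else 0)"
      by (simp only: sum.inter_filter[OF finite_lessThan])
  qed
  also have "\<dots> = (\<Sum>i<n. \<Sum>k<n. if k \<in> neighbour C a b i then \<delta> i else 0)"
    by (rule sum.swap)
  also have "\<dots> = (\<Sum>i<n. of_nat (card C) * \<delta> i)"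
  proof (rule sum.cong[OF refl])
    fix i assume "i \<in> {..<n}"
    then have "{k\<in>{..<n}. k \<in> neighbour C a b i} = neighbour C a b i"
      using neighbour_subset by auto
    then show "(\<Sum>k<n. if k \<in> neighbour C a b i then \<delta> i else 0) = of_nat (card C) * \<delta> i"
      by (simp add: sum.inter_filter[OF finite_lessThan, symmetric] card_neighbour)
  qed
  finally show ?thesis
    by (simp add: sum_distrib_left)
qed

lemma neighbour_sums_zero_imp_zero:
  fixes \<delta> :: "nat \<Rightarrow> 'a::field_char_0"
  assumes sums: "\<And>k. k < n \<Longrightarrow> (\<Sum>i\<in>{i. i < n \<and> k \<in> neighbour C a b i}. \<delta> i) = 0"
    and i: "i < n"
  shows "\<delta> i = 0"
proof -
  \<comment> \<open>Every neighbour has card C elements, so summing all equations kills the total sum.\<close>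
  have total: "(\<Sum>i<n. \<delta> i) = 0"
    using sum_neighbour_sums[of \<delta>] sums finite_C a_in_C by (auto simp: card_gt_0_iff)
  have in_C: "\<delta> k = 0" if "k \<in> C - {a}" for k
  proof -
    have "k < n"
      using that C_subset by auto
    then have "(\<Sum>i<n. \<delta> i) = \<delta> k + (\<Sum>i\<in>{..<n} - {k}. \<delta> i)"
      by (simp add: sum.remove)
    with sums[OF \<open>k < n\<close>] total show ?thesis
      by (simp add: neighbours_containing(1)[OF that])
  qed
  have outside: "\<delta> k = 0" if "k < n" "k \<notin> C" "k \<noteq> b" for k
    using sums[OF that(1)] by (simp add: neighbours_containing(2)[OF that])
  have at_b: "\<delta> b = 0"
    using sums[OF b_less] in_C finite_C b_notin_C by (simp add: neighbours_containing(3))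
  have off_a: "\<delta> k = 0" if "k < n" "k \<noteq> a" for k
    using in_C outside at_b that by (cases "k \<in> C"; cases "k = b") auto
  have "a < n"
    using a_in_C C_subset by auto
  then have "(\<Sum>i<n. \<delta> i) = \<delta> a"
    using off_a by (simp add: sum.remove)
  with total off_a i show ?thesis
    by (cases "i = a") auto
qed

end

lemma card_hyp_coords: "card (hyp_coords n d) = n choose d"
  using n_subsets[of "{..<n}" d] by (simp add: hyp_coords_def)

definition johnson_ball :: "nat \<Rightarrow> nat \<Rightarrow> nat \<Rightarrow> nat set \<Rightarrow> nat set set" where
  "johnson_ball n d \<rho> C = {S \<in> hyp_coords n d. d \<le> card (S \<inter> C) + \<rho>}"

lemma inj_Diff_pair: "inj (\<lambda>S :: 'a set. (C - S, S - C))"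
proof (rule injI)
  fix S S' assume "(C - S, S - C) = (C - S', S' - C)"
  then have "C - (C - S) \<union> (S - C) = C - (C - S') \<union> (S' - C)"
    by simp
  then show "S = S'"
    by blast
qed

lemma card_johnson_ball_le:
  assumes C: "C \<in> hyp_coords n d"
  shows "card (johnson_ball n d \<rho> C) \<le> (\<Sum>k\<le>\<rho>. (d choose k) * ((n - d) choose k))"
proof -
  have C_sub: "C \<subseteq> {..<n}" and card_C: "card C = d"
    using C by (auto simp: hyp_coords_def)
  have fin_C: "finite C"
    using C_sub finite_subset by blast
  define U where "U = {..<n} - C"
  have card_U: "card U = n - d"
    using C_sub card_C fin_C by (simp add: U_def card_Diff_subset)
  define Q where "Q k = {X. X \<subseteq> C \<and> card X = k} \<times> {Y. Y \<subseteq> U \<and> card Y = k}" for k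
  define g where "g S = (C - S, S - C)" for S :: "nat set"
  have "inj_on g (johnson_ball n d \<rho> C)"
    using inj_Diff_pair[of C] unfolding g_def by (rule inj_on_subset) simp
  moreover have "g ` johnson_ball n d \<rho> C \<subseteq> (\<Union>k\<le>\<rho>. Q k)"
  proof
    fix z assume "z \<in> g ` johnson_ball n d \<rho> C"
    then obtain S where S: "S \<in> johnson_ball n d \<rho> C" "z = g S"
      by blast
    then have S_sub: "S \<subseteq> {..<n}" and card_S: "card S = d" and near: "d \<le> card (S \<inter> C) + \<rho>"
      by (auto simp: johnson_ball_def hyp_coords_def)
    have "card (C - S) = d - card (S \<inter> C)"
      using card_Diff_subset_Int[of C S] fin_C card_C by (simp add: Int_commute)
    moreover have "card (S - C) = d - card (S \<inter> C)"
      using card_Diff_subset_Int[of S C] finite_subset[OF S_sub] card_S by simp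
    ultimately have "z \<in> Q (d - card (S \<inter> C))"
      using S(2) S_sub by (auto simp: Q_def g_def U_def)
    then show "z \<in> (\<Union>k\<le>\<rho>. Q k)"
      using near by (intro UN_I[of "d - card (S \<inter> C)"]) auto
  qed
  moreover have fin_Q: "finite (Q k)" for k
    by (simp add: Q_def U_def fin_C)
  ultimately have "card (johnson_ball n d \<rho> C) \<le> card (\<Union>k\<le>\<rho>. Q k)"
    by (simp add: card_image[symmetric] card_mono)
  also have "\<dots> \<le> (\<Sum>k\<le>\<rho>. card (Q k))"
    by (rule card_UN_le) simp
  also have "\<dots> = (\<Sum>k\<le>\<rho>. (d choose k) * ((n - d) choose k))"
    using n_subsets[OF fin_C] n_subsets[of U] card_C card_U
    by (simp add: Q_def U_def card_cartesian_product)
  finally show ?thesis .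
qed

lemma exists_coord_far_from:
  assumes small: "(\<Sum>k\<le>\<rho>. (d choose k) * ((n - d) choose k)) * m < n choose d"
    and c: "\<And>i. i < m \<Longrightarrow> c i \<in> hyp_coords n d"
  shows "\<exists>S\<in>hyp_coords n d. \<forall>i<m. card (S \<inter> c i) + \<rho> < d"
proof -
  define near where "near = (\<Union>i<m. johnson_ball n d \<rho> (c i))"
  have "card near \<le> (\<Sum>i<m. card (johnson_ball n d \<rho> (c i)))"
    unfolding near_def by (rule card_UN_le) simp
  also have "\<dots> \<le> (\<Sum>i<m. \<Sum>k\<le>\<rho>. (d choose k) * ((n - d) choose k))"
    using c by (intro sum_mono card_johnson_ball_le) simp
  also have "\<dots> < card (hyp_coords n d)"
    using small by (simp add: card_hyp_coords mult.commute)
  finally have "card near < card (hyp_coords n d)" .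
  moreover have "near \<subseteq> hyp_coords n d"
    by (auto simp: near_def johnson_ball_def)
  ultimately have "\<not> hyp_coords n d \<subseteq> near"
    by (metis subset_antisym less_irrefl)
  then obtain S where "S \<in> hyp_coords n d" "S \<notin> near"
    by blast
  then show ?thesis
    by (auto simp: near_def johnson_ball_def not_le)
qed

lemma exists_separated_family:
  assumes "(\<Sum>k\<le>\<rho>. (d choose k) * ((n - d) choose k)) * r \<le> n choose d"
  shows "\<exists>c. (\<forall>j<r. c j \<in> hyp_coords n d) \<and> (\<forall>i<r. \<forall>j<r. i \<noteq> j \<longrightarrow> card (c i \<inter> c j) + \<rho> < d)"
proof -
  define B where "B = (\<Sum>k\<le>\<rho>. (d choose k) * ((n - d) choose k))"
  have "0 < B"
    unfolding B_def by (rule sum_pos2[of _ 0]) simp_all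
  have "\<exists>c. (\<forall>j<m. c j \<in> hyp_coords n d) \<and> (\<forall>i<m. \<forall>j<m. i \<noteq> j \<longrightarrow> card (c i \<inter> c j) + \<rho> < d)"
    if "m \<le> r" for m
    using that
  proof (induction m)
    case 0
    show ?case by simp
  next
    case (Suc m)
    then obtain c where c: "\<forall>j<m. c j \<in> hyp_coords n d"
      "\<forall>i<m. \<forall>j<m. i \<noteq> j \<longrightarrow> card (c i \<inter> c j) + \<rho> < d"
      by auto
    have "B * m < B * r"
      using \<open>0 < B\<close> Suc.prems by simp
    with assms have "B * m < n choose d"
      unfolding B_def[symmetric] by linarith
    then obtain S where S: "S \<in> hyp_coords n d" "\<forall>i<m. card (S \<inter> c i) + \<rho> < d"
      using exists_coord_far_from[where \<rho> = \<rho> and m = m and c = c] c(1) unfolding B_def by blast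
    show ?case
      using c S by (intro exI[of _ "c(m := S)"]) (auto simp: less_Suc_eq Int_commute)
  qed
  then show ?thesis
    by blast
qed

section \<open>Dominant terms\<close>

lemma tendsto_of_real_powr_nonpos:
  assumes "e \<le> 0"
  shows "((\<lambda>t. of_real (t powr e) :: 'a::real_normed_algebra_1) \<longlongrightarrow> (if e = 0 then 1 else 0)) at_top"
proof (cases "e = 0")
  case True
  have "\<forall>\<^sub>F t in at_top. 1 = (of_real (t powr e) :: 'a)"
    using eventually_gt_at_top[of 0] by eventually_elim (simp add: True)
  with True show ?thesis
    by (simp add: tendsto_eventually)
next
  case False
  with assms have "((\<lambda>t. t powr e) \<longlongrightarrow> 0) at_top"
    by (intro tendsto_neg_powr filterlim_ident) simp
  with False show ?thesis
    using tendsto_of_real by fastforce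
qed

lemma eventually_sum_powr_nonzero:
  fixes a :: "'i \<Rightarrow> 'a::real_normed_field" and H :: "'i \<Rightarrow> real \<Rightarrow> 'a"
  assumes F: "finite F" "F \<noteq> {}" and a: "\<And>\<alpha>. \<alpha> \<in> F \<Longrightarrow> a \<alpha> \<noteq> 0"
    and inj: "inj_on E F" and H: "\<And>\<alpha>. \<alpha> \<in> F \<Longrightarrow> (H \<alpha> \<longlongrightarrow> 1) at_top"
  shows "\<forall>\<^sub>F t in at_top. (\<Sum>\<alpha>\<in>F. a \<alpha> * of_real (t powr E \<alpha>) * H \<alpha> t) \<noteq> 0"
proof -
  have "Max (E ` F) \<in> E ` F"
    using F by (intro Max_in) auto
  then obtain \<alpha>0 where \<alpha>0: "\<alpha>0 \<in> F" "E \<alpha>0 = Max (E ` F)"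
    by (metis imageE)
  have E_le: "E \<alpha> - E \<alpha>0 \<le> 0" if "\<alpha> \<in> F" for \<alpha>
    using \<alpha>0 that F by simp
  have E_eq: "E \<alpha> = E \<alpha>0 \<longleftrightarrow> \<alpha> = \<alpha>0" if "\<alpha> \<in> F" for \<alpha>
    using \<alpha>0(1) that inj by (simp add: inj_on_eq_iff)
  define G where "G t = (\<Sum>\<alpha>\<in>F. a \<alpha> * of_real (t powr (E \<alpha> - E \<alpha>0)) * H \<alpha> t)" for t
  \<comment> \<open>After dividing by the largest power, only the term of \<alpha>0 survives in the limit.\<close>
  have "(G \<longlongrightarrow> (\<Sum>\<alpha>\<in>F. a \<alpha> * (if E \<alpha> - E \<alpha>0 = 0 then 1 else 0) * 1)) at_top"
    unfolding G_def using E_le H by (intro tendsto_intros tendsto_of_real_powr_nonpos) auto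
  moreover have "(\<Sum>\<alpha>\<in>F. a \<alpha> * (if E \<alpha> - E \<alpha>0 = 0 then 1 else 0) * 1)
      = (\<Sum>\<alpha>\<in>F. if \<alpha> = \<alpha>0 then a \<alpha> else 0)"
    by (rule sum.cong) (simp_all add: E_eq)
  ultimately have "(G \<longlongrightarrow> a \<alpha>0) at_top"
    using F \<alpha>0 by simp
  then have "\<forall>\<^sub>F t in at_top. G t \<noteq> 0"
    using a[OF \<alpha>0(1)] by (rule tendsto_imp_eventually_ne)
  then show ?thesis
    using eventually_gt_at_top[of 0]
  proof eventually_elim
    case (elim t)
    have "(\<Sum>\<alpha>\<in>F. a \<alpha> * of_real (t powr E \<alpha>) * H \<alpha> t) = of_real (t powr E \<alpha>0) * G t"
      unfolding G_def sum_distrib_left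
      by (intro sum.cong refl) (simp add: powr_diff \<open>0 < t\<close> field_simps)
    with elim show ?case
      by simp
  qed
qed

lemma mult_add_eq_mult_add_iff:
  fixes j j' k k' n :: nat
  assumes "k < n" "k' < n"
  shows "j * n + k = j' * n + k' \<longleftrightarrow> j = j' \<and> k = k'"
proof
  assume eq: "j * n + k = j' * n + k'"
  then have "(j * n + k) div n = (j' * n + k') div n"
    by simp
  with assms have "j = j'"
    by simp
  with eq show "j = j' \<and> k = k'"
    by simp
qed simp

lemma prod_of_real_powr:
  fixes t :: real
  assumes "0 < t"
  shows "(\<Prod>q\<in>Q. of_real (t powr a q) :: 'a::real_normed_field) = of_real (t powr (\<Sum>q\<in>Q. a q))"
  using assms by (simp add: powr_sum flip: of_real_prod)

lemma prod_of_real_powr_power: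
  fixes t :: real
  assumes "0 < t"
  shows "(\<Prod>q\<in>Q. (of_real (t powr a q) :: 'a::real_normed_field) ^ m q) =
    of_real (t powr (\<Sum>q\<in>Q. real (m q) * a q))"
proof -
  have "(of_real (t powr a q) :: 'a) ^ m q = of_real (t powr (real (m q) * a q))" for q
    using assms by (simp add: powr_realpow[symmetric] powr_powr mult.commute flip: of_real_power)
  then show ?thesis
    using prod_of_real_powr[OF assms] by simp
qed

section \<open>The lower bound\<close>

locale separated_centres =
  fixes n d r :: nat and c :: "nat \<Rightarrow> nat set"
  assumes d_pos: "0 < d" and d_less: "d < n"
    and centre: "\<And>j. j < r \<Longrightarrow> c j \<in> hyp_coords n d"
    and separated: "\<And>i j. i < r \<Longrightarrow> j < r \<Longrightarrow> i \<noteq> j \<Longrightarrow> card (c i \<inter> c j) + 2 < d"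
begin

lemma centre_subset: "j < r \<Longrightarrow> c j \<subseteq> {..<n}"
  and card_centre: "j < r \<Longrightarrow> card (c j) = d"
  using centre by (auto simp: hyp_coords_def)

definition anchor :: "nat \<Rightarrow> nat" where
  "anchor j = (SOME a. a \<in> c j)"

definition outsider :: "nat \<Rightarrow> nat" where
  "outsider j = (SOME b. b < n \<and> b \<notin> c j)"

lemma neighbourhood_centre: "j < r \<Longrightarrow> neighbourhood n (c j) (anchor j) (outsider j)"
proof unfold_locales
  assume j: "j < r"
  show "c j \<subseteq> {..<n}"
    using centre_subset[OF j] .
  have "c j \<noteq> {}"
    using card_centre[OF j] d_pos by auto
  then show "anchor j \<in> c j"
    unfolding anchor_def by (rule someI_ex[OF ex_in_conv[THEN iffD2]])
  have "\<not> {..<n} \<subseteq> c j"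
    using card_mono[OF finite_subset[OF centre_subset[OF j]], of "{..<n}"] card_centre[OF j] d_less
    by auto
  then have "\<exists>b. b < n \<and> b \<notin> c j"
    by auto
  then show "outsider j < n" "outsider j \<notin> c j"
    unfolding outsider_def by (metis (mono_tags, lifting) someI_ex)+
qed

definition Idx :: "(nat \<times> nat) set" where
  "Idx = {..<r} \<times> {..<n}"

lemma finite_Idx: "finite Idx"
  by (simp add: Idx_def)

definition coord :: "nat \<times> nat \<Rightarrow> nat set" where
  "coord q = neighbour (c (fst q)) (anchor (fst q)) (outsider (fst q)) (snd q)"

lemma coord_in_hyp_coords: "q \<in> Idx \<Longrightarrow> coord q \<in> hyp_coords n d"
proof -
  assume "q \<in> Idx"
  then have j: "fst q < r" and i: "snd q < n"
    by (auto simp: Idx_def)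
  interpret neighbourhood n "c (fst q)" "anchor (fst q)" "outsider (fst q)"
    by (rule neighbourhood_centre[OF j])
  show ?thesis
    using neighbour_subset[OF i] card_neighbour card_centre[OF j]
    by (simp add: coord_def hyp_coords_def)
qed

lemma coord_subset: "q \<in> Idx \<Longrightarrow> coord q \<subseteq> {..<n}"
  and card_coord: "q \<in> Idx \<Longrightarrow> card (coord q) = d"
  using coord_in_hyp_coords by (auto simp: hyp_coords_def)

lemma finite_coord: "q \<in> Idx \<Longrightarrow> finite (coord q)"
  using coord_subset finite_subset by blast

lemma card_coord_Int_own: "q \<in> Idx \<Longrightarrow> d \<le> card (coord q \<inter> c (fst q)) + 1"
proof -
  assume "q \<in> Idx"
  then have j: "fst q < r"
    by (auto simp: Idx_def)
  interpret neighbourhood n "c (fst q)" "anchor (fst q)" "outsider (fst q)"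
    by (rule neighbourhood_centre[OF j])
  show ?thesis
    using card_neighbour_Int card_centre[OF j] by (simp add: coord_def)
qed

lemma card_coord_Int_other:
  assumes q: "q \<in> Idx" and j': "j' < r" "j' \<noteq> fst q"
  shows "card (coord q \<inter> c j') + 1 < d"
proof -
  have j: "fst q < r"
    using q by (auto simp: Idx_def)
  have "card (coord q - c (fst q)) \<le> 1"
    using card_coord_Int_own[OF q] card_coord[OF q] finite_coord[OF q]
    by (simp add: card_Diff_subset_Int)
  moreover have "card (coord q \<inter> c j') \<le> card ((c (fst q) \<inter> c j') \<union> (coord q - c (fst q)))"
    using finite_coord[OF q] finite_subset[OF centre_subset[OF j]] by (intro card_mono) auto
  then have "card (coord q \<inter> c j') \<le> card (c (fst q) \<inter> c j') + card (coord q - c (fst q))"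
    using card_Un_le order_trans by blast
  ultimately show ?thesis
    using separated[OF j j'(1)] j'(2) by linarith
qed

lemma inj_on_coord: "inj_on coord Idx"
proof (rule inj_onI)
  fix q q' assume q: "q \<in> Idx" and q': "q' \<in> Idx" and eq: "coord q = coord q'"
  \<comment> \<open>The centre of a coordinate is recovered as the only centre it is close to.\<close>
  have "fst q = fst q'"
    using card_coord_Int_own[OF q] card_coord_Int_other[OF q', of "fst q"] q eq
    by (fastforce simp: Idx_def)
  moreover have "fst q < r"
    using q by (auto simp: Idx_def)
  then have "inj (neighbour (c (fst q)) (anchor (fst q)) (outsider (fst q)))"
    using neighbourhood.inj_neighbour[OF neighbourhood_centre] by blast
  then have "snd q = snd q'"
    using eq \<open>fst q = fst q'\<close> by (simp add: coord_def inj_eq)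
  ultimately show "q = q'"
    by (simp add: prod_eq_iff)
qed

lemma card_coord_image: "card (coord ` Idx) = n * r"
  using card_image[OF inj_on_coord] by (simp add: Idx_def card_cartesian_product)

\<comment> \<open>The parameter \<mu> j k is specialised to t powr weight x j k.  The term d + 1 on c j makes the
  j-th summand dominate on coordinates near c j; the perturbation x ^ (j n + k + 1) separates the
  exponents of distinct monomials for generic x.\<close>
definition weight :: "real \<Rightarrow> nat \<Rightarrow> nat \<Rightarrow> real" where
  "weight x j k = (real d + 1) * of_bool (k \<in> c j) + x ^ (j * n + k + 1)"

definition set_weight :: "real \<Rightarrow> nat \<Rightarrow> nat set \<Rightarrow> real" where
  "set_weight x j S = (\<Sum>k\<in>S. weight x j k)"

definition lead_weight :: "real \<Rightarrow> nat \<times> nat \<Rightarrow> real" where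
  "lead_weight x q = set_weight x (fst q) (coord q)"

definition monomial_weight :: "real \<Rightarrow> (nat set \<Rightarrow>\<^sub>0 nat) \<Rightarrow> real" where
  "monomial_weight x \<alpha> = (\<Sum>q\<in>Idx. real (Poly_Mapping.lookup \<alpha> (coord q)) * lead_weight x q)"

lemma set_weight_eq:
  "finite S \<Longrightarrow>
    set_weight x j S = (real d + 1) * real (card (S \<inter> c j)) + (\<Sum>k\<in>S. x ^ (j * n + k + 1))"
  by (simp add: set_weight_def weight_def sum.distrib Collect_mem_eq flip: sum_distrib_left)

lemma set_weight_other_le:
  assumes q: "q \<in> Idx" and j': "j' < r" "j' \<noteq> fst q" and x: "0 < x" "x < 1"
  shows "set_weight x j' (coord q) - lead_weight x q \<le> -1"
proof -
  define S where "S = coord q"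
  have S: "finite S" "card S = d"
    using finite_coord[OF q] card_coord[OF q] by (simp_all add: S_def)
  have "(\<Sum>k\<in>S. x ^ (j' * n + k + 1)) \<le> (\<Sum>k\<in>S. 1)"
    using x by (intro sum_mono power_le_one) simp_all
  then have other: "set_weight x j' S \<le> (real d + 1) * real (card (S \<inter> c j')) + real d"
    using S by (simp add: set_weight_eq)
  have "0 \<le> (\<Sum>k\<in>S. x ^ (fst q * n + k + 1))"
    using x by (simp add: sum_nonneg)
  then have own: "(real d + 1) * real (card (S \<inter> c (fst q))) \<le> lead_weight x q"
    using S by (simp add: lead_weight_def set_weight_eq S_def)
  have "card (S \<inter> c j') + 1 \<le> card (S \<inter> c (fst q))"
    using card_coord_Int_own[OF q] card_coord_Int_other[OF q j'] by (simp add: S_def)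
  then have "(real d + 1) * (real (card (S \<inter> c j')) + 1) \<le> (real d + 1) * real (card (S \<inter> c (fst q)))"
    by (intro mult_left_mono) simp_all
  with other own show ?thesis
    by (simp add: S_def algebra_simps)
qed

definition lead_weight_poly :: "nat \<times> nat \<Rightarrow> real poly" where
  "lead_weight_poly q = [:(real d + 1) * real (card (coord q \<inter> c (fst q))):]
     + (\<Sum>k\<in>coord q. monom 1 (fst q * n + k + 1))"

definition monomial_weight_poly :: "(nat set \<Rightarrow>\<^sub>0 nat) \<Rightarrow> real poly" where
  "monomial_weight_poly \<alpha> =
     (\<Sum>q\<in>Idx. smult (real (Poly_Mapping.lookup \<alpha> (coord q))) (lead_weight_poly q))"

lemma poly_monomial_weight_poly: "poly (monomial_weight_poly \<alpha>) x = monomial_weight x \<alpha>"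
proof -
  have "poly (lead_weight_poly q) x = lead_weight x q" if "q \<in> Idx" for q
    using finite_coord[OF that]
    by (simp add: lead_weight_poly_def lead_weight_def set_weight_eq poly_sum poly_monom)
  then show ?thesis
    by (simp add: monomial_weight_poly_def monomial_weight_def poly_sum)
qed

lemma coeff_lead_weight_poly:
  assumes q: "q \<in> Idx" and k: "k < n"
  shows "coeff (lead_weight_poly q) (j * n + k + 1) = of_bool (fst q = j \<and> k \<in> coord q)"
proof -
  have "coeff (lead_weight_poly q) (j * n + k + 1) =
      (\<Sum>k'\<in>coord q. if fst q * n + k' = j * n + k then 1 else 0)"
    by (simp add: lead_weight_poly_def coeff_sum)
  also have "\<dots> = (\<Sum>k'\<in>coord q. if fst q = j \<and> k' = k then 1 else 0)"
    using coord_subset[OF q] k by (intro sum.cong refl) (auto simp: mult_add_eq_mult_add_iff)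
  also have "\<dots> = of_bool (fst q = j \<and> k \<in> coord q)"
    using finite_coord[OF q] by (cases "fst q = j") simp_all
  finally show ?thesis .
qed

lemma coeff_monomial_weight_poly:
  assumes j: "j < r" and k: "k < n"
  shows "coeff (monomial_weight_poly \<alpha>) (j * n + k + 1) =
    (\<Sum>i\<in>{i. i < n \<and> k \<in> coord (j, i)}. real (Poly_Mapping.lookup \<alpha> (coord (j, i))))"
proof -
  have "coeff (monomial_weight_poly \<alpha>) (j * n + k + 1) =
      (\<Sum>q\<in>Idx. real (Poly_Mapping.lookup \<alpha> (coord q)) * of_bool (fst q = j \<and> k \<in> coord q))"
    unfolding monomial_weight_poly_def coeff_sum coeff_smult
    by (intro sum.cong refl) (simp only: coeff_lead_weight_poly k)
  also have "\<dots> = (\<Sum>q\<in>Idx \<inter> {q. fst q = j \<and> k \<in> coord q}. real (Poly_Mapping.lookup \<alpha> (coord q)))"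
    by (simp add: Idx_def)
  also have "Idx \<inter> {q. fst q = j \<and> k \<in> coord q} = Pair j ` {i. i < n \<and> k \<in> coord (j, i)}"
    using j by (auto simp: Idx_def)
  finally show ?thesis
    by (simp add: sum.reindex inj_on_def)
qed

lemma monomial_weight_poly_inject:
  assumes keys: "Poly_Mapping.keys \<alpha> \<subseteq> coord ` Idx" "Poly_Mapping.keys \<beta> \<subseteq> coord ` Idx"
    and eq: "monomial_weight_poly \<alpha> = monomial_weight_poly \<beta>"
  shows "\<alpha> = \<beta>"
proof -
  have "Poly_Mapping.lookup \<alpha> (coord (j, i)) = Poly_Mapping.lookup \<beta> (coord (j, i))"
    if j: "j < r" and i: "i < n" for j i
  proof -
    interpret neighbourhood n "c j" "anchor j" "outsider j"
      by (rule neighbourhood_centre[OF j])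
    define \<delta> where "\<delta> i = real (Poly_Mapping.lookup \<alpha> (coord (j, i))) -
        real (Poly_Mapping.lookup \<beta> (coord (j, i)))" for i
    have "(\<Sum>i\<in>{i. i < n \<and> k \<in> neighbour (c j) (anchor j) (outsider j) i}. \<delta> i) = 0" if "k < n" for k
      using coeff_monomial_weight_poly[OF j that, of \<alpha>] coeff_monomial_weight_poly[OF j that, of \<beta>] eq
      by (simp add: \<delta>_def sum_subtractf coord_def)
    then have "\<delta> i = 0"
      using i by (rule neighbour_sums_zero_imp_zero)
    then show ?thesis
      by (simp add: \<delta>_def)
  qed
  moreover have "Poly_Mapping.lookup \<alpha> S = 0" "Poly_Mapping.lookup \<beta> S = 0"
    if "S \<notin> coord ` Idx" for S
    using keys that by (auto simp: in_keys_iff)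
  ultimately have "Poly_Mapping.lookup \<alpha> S = Poly_Mapping.lookup \<beta> S" for S
    by (cases "S \<in> coord ` Idx") (auto simp: Idx_def)
  then show ?thesis
    by (rule poly_mapping_eqI)
qed

lemma exists_separating_weight:
  assumes A: "finite A" and keys: "\<And>\<alpha>. \<alpha> \<in> A \<Longrightarrow> Poly_Mapping.keys \<alpha> \<subseteq> coord ` Idx"
  shows "\<exists>x. 0 < x \<and> x < 1 \<and> inj_on (monomial_weight x) A"
proof -
  define bad where "bad = (\<Union>\<alpha>\<in>A. \<Union>\<beta>\<in>A - {\<alpha>}.
      {x. poly (monomial_weight_poly \<alpha> - monomial_weight_poly \<beta>) x = 0})"
  have "finite bad"
    unfolding bad_def using A keys monomial_weight_poly_inject
    by (intro finite_UN_I poly_roots_finite) auto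
  then have "infinite ({0<..<1::real} - bad)"
    by (simp add: Diff_infinite_finite)
  then obtain x where x: "x \<in> {0<..<1}" "x \<notin> bad"
    using infinite_imp_nonempty by blast
  have "inj_on (monomial_weight x) A"
    using x(2) by (intro inj_onI) (auto simp: bad_def poly_monomial_weight_poly)
  with x(1) show ?thesis
    by auto
qed

definition spec_point :: "real \<Rightarrow> real \<Rightarrow> nat set \<Rightarrow> complex" where
  "spec_point x t S =
     (if S \<in> hyp_coords n d then \<Sum>j<r. \<Prod>k\<in>S. of_real (t powr weight x j k) else 0)"

definition correction :: "real \<Rightarrow> nat \<times> nat \<Rightarrow> real \<Rightarrow> complex" where
  "correction x q t = (\<Sum>j<r. of_real (t powr (set_weight x j (coord q) - lead_weight x q)))"

lemma spec_point_in_image: "spec_point x t \<in> secant_param_image n d r"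
  unfolding secant_param_image_def spec_point_def[abs_def]
  by (intro CollectI exI[of _ "\<lambda>j k. of_real (t powr weight x j k)"]) simp

lemma spec_point_coord:
  assumes "q \<in> Idx" "0 < t"
  shows "spec_point x t (coord q) = of_real (t powr lead_weight x q) * correction x q t"
proof -
  have "spec_point x t (coord q) = (\<Sum>j<r. of_real (t powr set_weight x j (coord q)))"
    using assms coord_in_hyp_coords by (simp add: spec_point_def set_weight_def prod_of_real_powr)
  also have "\<dots> = (\<Sum>j<r. of_real (t powr lead_weight x q) *
      of_real (t powr (set_weight x j (coord q) - lead_weight x q)))"
    by (intro sum.cong refl) (simp flip: of_real_mult powr_add)
  also have "\<dots> = of_real (t powr lead_weight x q) * correction x q t"
    by (simp add: correction_def sum_distrib_left)
  finally show ?thesis .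
qed

lemma correction_tendsto:
  assumes q: "q \<in> Idx" and x: "0 < x" "x < 1"
  shows "(correction x q \<longlongrightarrow> 1) at_top"
proof -
  \<comment> \<open>Only the summand of the centre of the coordinate survives.\<close>
  have exponent: "set_weight x j (coord q) - lead_weight x q \<le> 0"
    and exponent_eq: "set_weight x j (coord q) = lead_weight x q \<longleftrightarrow> j = fst q"
    if "j < r" for j
    using set_weight_other_le[OF q that _ x] by (fastforce simp: lead_weight_def)+
  have "(correction x q \<longlongrightarrow>
      (\<Sum>j<r. if set_weight x j (coord q) - lead_weight x q = 0 then 1 else 0)) at_top"
    unfolding correction_def[abs_def] using exponent
    by (intro tendsto_sum tendsto_of_real_powr_nonpos) simp
  also have "(\<Sum>j<r. if set_weight x j (coord q) - lead_weight x q = 0 then 1 else 0) =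
      (\<Sum>j<r. if j = fst q then 1 else (0::complex))"
    by (rule sum.cong) (simp_all add: exponent_eq)
  also have "\<dots> = 1"
    using q by (auto simp: Idx_def)
  finally show ?thesis .
qed

lemma poly_eval_spec_point:
  assumes vars: "poly_vars p \<subseteq> coord ` Idx" and t: "0 < t"
  shows "poly_eval p (spec_point x t) =
    (\<Sum>\<alpha>\<in>Poly_Mapping.keys p. Poly_Mapping.lookup p \<alpha> * of_real (t powr monomial_weight x \<alpha>) *
       (\<Prod>q\<in>Idx. correction x q t ^ Poly_Mapping.lookup \<alpha> (coord q)))"
  unfolding poly_eval_def
proof (intro sum.cong refl)
  fix \<alpha> assume "\<alpha> \<in> Poly_Mapping.keys p"
  then have keys: "Poly_Mapping.keys \<alpha> \<subseteq> coord ` Idx"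
    using vars by (auto simp: poly_vars_def)
  have "(\<Prod>v\<in>Poly_Mapping.keys \<alpha>. spec_point x t v ^ Poly_Mapping.lookup \<alpha> v)
      = (\<Prod>q\<in>Idx. spec_point x t (coord q) ^ Poly_Mapping.lookup \<alpha> (coord q))"
    using prod_keys_power_eq[OF finite_imageI[OF finite_Idx] keys]
    by (simp add: prod.reindex[OF inj_on_coord])
  also have "\<dots> = of_real (t powr monomial_weight x \<alpha>) *
      (\<Prod>q\<in>Idx. correction x q t ^ Poly_Mapping.lookup \<alpha> (coord q))"
    using t by (simp add: spec_point_coord power_mult_distrib prod.distrib prod_of_real_powr_power
        monomial_weight_def cong: prod.cong)
  finally show "Poly_Mapping.lookup p \<alpha> *
      (\<Prod>v\<in>Poly_Mapping.keys \<alpha>. spec_point x t v ^ Poly_Mapping.lookup \<alpha> v) =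
    Poly_Mapping.lookup p \<alpha> * of_real (t powr monomial_weight x \<alpha>) *
      (\<Prod>q\<in>Idx. correction x q t ^ Poly_Mapping.lookup \<alpha> (coord q))"
    by (simp add: mult.assoc)
qed

lemma alg_indep_coords: "alg_indep_on (secant_param_image n d r) (coord ` Idx)"
  unfolding alg_indep_on_def
proof (intro allI impI)
  fix p :: "nat set cpoly"
  assume vars: "poly_vars p \<subseteq> coord ` Idx"
    and vanish: "\<forall>y\<in>secant_param_image n d r. poly_eval p y = 0"
  show "p = 0"
  proof (rule ccontr)
    assume "p \<noteq> 0"
    have keys: "Poly_Mapping.keys \<alpha> \<subseteq> coord ` Idx" if "\<alpha> \<in> Poly_Mapping.keys p" for \<alpha>
      using vars that by (auto simp: poly_vars_def)
    obtain x where x: "0 < x" "x < 1" "inj_on (monomial_weight x) (Poly_Mapping.keys p)"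
      using exists_separating_weight[OF finite_keys keys] by blast
    have "((\<lambda>t. \<Prod>q\<in>Idx. correction x q t ^ Poly_Mapping.lookup \<alpha> (coord q)) \<longlongrightarrow>
        (\<Prod>q\<in>Idx. 1 ^ Poly_Mapping.lookup \<alpha> (coord q))) at_top" for \<alpha>
      by (intro tendsto_prod tendsto_power correction_tendsto x(1,2))
    then have "\<forall>\<^sub>F t in at_top. (\<Sum>\<alpha>\<in>Poly_Mapping.keys p. Poly_Mapping.lookup p \<alpha> *
        of_real (t powr monomial_weight x \<alpha>) *
        (\<Prod>q\<in>Idx. correction x q t ^ Poly_Mapping.lookup \<alpha> (coord q))) \<noteq> 0"
      using \<open>p \<noteq> 0\<close> x(3) by (intro eventually_sum_powr_nonzero) (simp_all add: in_keys_iff)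
    then have "\<forall>\<^sub>F t in at_top. poly_eval p (spec_point x t) \<noteq> 0"
      using eventually_gt_at_top[of 0] by eventually_elim (simp add: poly_eval_spec_point vars)
    then obtain t where "poly_eval p (spec_point x t) \<noteq> 0"
      by (meson eventually_happens' trivial_limit_at_top_linorder)
    with vanish spec_point_in_image show False
      by blast
  qed
qed

lemma secant_dim_eq: "secant_dim n d r = n * r - 1"
proof -
  have "affine_dim (hyp_coords n d) (secant_param_image n d r) = n * r"
    using coord_in_hyp_coords alg_indep_coords card_coord_image card_alg_indep_le
    by (intro affine_dim_eqI) auto
  then show ?thesis
    by (simp add: secant_dim_def)
qed

end

lemma le_one_add_mult_diff:
  fixes d n :: nat
  assumes "1 \<le> d" "d < n"
  shows "n \<le> 1 + d * (n - d)"
proof -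
  obtain e where n: "n = Suc (d + e)"
    using less_imp_Suc_add[OF assms(2)] by blast
  have "1 * e \<le> d * e"
    using assms(1) by (rule mult_le_mono1)
  then show ?thesis
    by (simp add: n)
qed

theorem theorem5p8:
  fixes n d r :: nat
  assumes "1 \<le> d" and "d < n" and "1 \<le> r"
    and "(1 + d * (n - d) + (d choose 2) * ((n - d) choose 2)) * r \<le> n choose d"
  shows "secant_dim n d r = min (n * r - 1) ((n choose d) - 1)
         \<and> secant_dim n d r = n * r - 1"
proof -
  have "(\<Sum>k\<le>2. (d choose k) * ((n - d) choose k)) * r \<le> n choose d"
    using assms(4) by (simp add: numeral_2_eq_2)
  then obtain c where "\<forall>j<r. c j \<in> hyp_coords n d"
    "\<forall>i<r. \<forall>j<r. i \<noteq> j \<longrightarrow> card (c i \<inter> c j) + 2 < d"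
    using exists_separated_family by blast
  then interpret separated_centres n d r c
    using assms(1,2) by unfold_locales auto
  have "n * r \<le> (1 + d * (n - d) + (d choose 2) * ((n - d) choose 2)) * r"
    using le_one_add_mult_diff[OF assms(1,2)] by (intro mult_right_mono) simp_all
  with assms(4) have "n * r \<le> n choose d"
    by linarith
  with secant_dim_eq show ?thesis
    by simp
qed

end
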